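(* Let $R$ be a finite group, let $S\subseteq R$, and let $K,H$ be subgroups of $R$ such that (1) $1<K\trianglelefteq H<R$, (2) $K(S\setminus H)=S\setminus H=(S\setminus H)K$, and (3) $\mathrm{Aut}(R)_S=1$. Then $\mathrm{Cay}(R,S)$ is not a DRR, so $R$ is not DRR-detecting; and if moreover $S=S^{-1}$, then $\mathrm{Cay}(R,S)$ is not a GRR, so $R$ is not GRR-detecting.
   Context: For a group $R$ and $S\subseteq R$, the Cayley digraph $\mathrm{Cay}(R,S)$ has vertex set $R$ and an arc from $r$ to $sr$ whenever $s\in S$. It is a DRR if $\mathrm{Aut}(\mathrm{Cay}(R,S))$ equals the right regular representation $\hat R$, and a GRR if additionally $S=S^{-1}$. $\mathrm{Aut}(R)_S$ is the group of automorphisms of $R$ fixing $S$ setwise. $R$ is DRR-detecting if for every $S\subseteq R$, $\mathrm{Aut}(R)_S=1$ implies $\mathrm{Cay}(R,S)$ is a DRR; GRR-detecting if for every $S\subseteq R$ with $S=S^{-1}$, $\mathrm{Aut}(R)_S=1$ implies $\mathrm{Cay}(R,S)$ is a GRR. *)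

theory Defs
  imports "HOL-Algebra.Algebra"
begin

definition cay_arc :: "('a, 'b) monoid_scheme \<Rightarrow> 'a set \<Rightarrow> 'a \<Rightarrow> 'a \<Rightarrow> bool" where
  "cay_arc R S x y \<longleftrightarrow> y \<otimes>\<^bsub>R\<^esub> m_inv R x \<in> S"

definition cay_aut :: "('a, 'b) monoid_scheme \<Rightarrow> 'a set \<Rightarrow> ('a \<Rightarrow> 'a) set" where
  "cay_aut R S = {\<sigma>. \<sigma> \<in> extensional (carrier R) \<and> bij_betw \<sigma> (carrier R) (carrier R) \<and>
      (\<forall>x\<in>carrier R. \<forall>y\<in>carrier R. cay_arc R S (\<sigma> x) (\<sigma> y) \<longleftrightarrow> cay_arc R S x y)}"

definition right_regular :: "('a, 'b) monoid_scheme \<Rightarrow> ('a \<Rightarrow> 'a) set" where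
  "right_regular R = {(\<lambda>x\<in>carrier R. x \<otimes>\<^bsub>R\<^esub> g) | g. g \<in> carrier R}"

definition is_DRR :: "('a, 'b) monoid_scheme \<Rightarrow> 'a set \<Rightarrow> bool" where
  "is_DRR R S \<longleftrightarrow> cay_aut R S = right_regular R"

definition inv_set :: "('a, 'b) monoid_scheme \<Rightarrow> 'a set \<Rightarrow> 'a set" where
  "inv_set R S = m_inv R ` S"

definition is_GRR :: "('a, 'b) monoid_scheme \<Rightarrow> 'a set \<Rightarrow> bool" where
  "is_GRR R S \<longleftrightarrow> is_DRR R S \<and> S = inv_set R S"

definition aut_stab_trivial :: "('a, 'b) monoid_scheme \<Rightarrow> 'a set \<Rightarrow> bool" where
  "aut_stab_trivial R S \<longleftrightarrow>
     (\<forall>\<phi>\<in>iso R R. \<phi> ` S = S \<longrightarrow> (\<forall>x\<in>carrier R. \<phi> x = x))"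

definition DRR_detecting :: "('a, 'b) monoid_scheme \<Rightarrow> bool" where
  "DRR_detecting R \<longleftrightarrow>
     (\<forall>S. S \<subseteq> carrier R \<longrightarrow> aut_stab_trivial R S \<longrightarrow> is_DRR R S)"

definition GRR_detecting :: "('a, 'b) monoid_scheme \<Rightarrow> bool" where
  "GRR_detecting R \<longleftrightarrow>
     (\<forall>S. S \<subseteq> carrier R \<longrightarrow> S = inv_set R S \<longrightarrow> aut_stab_trivial R S \<longrightarrow> is_GRR R S)"

end

(* The witness is the permutation of R that multiplies the points of H on the right by a fixed
   k \<in> K - {1} and fixes every point outside H. Arcs inside H are preserved since
   (y k)(x k)^-1 = y x^-1; arcs outside H are untouched. An arc between H and its complement has
   label y x^-1 \<notin> H, and the translation multiplies that label on one side by a conjugate of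
   k or k^-1 by an element of H, which lies in K by normality; since S - H is a union of
   K-cosets on both sides, membership in S is unchanged. This permutation fixes the points outside
   the proper subgroup H but moves 1, so it is not a right translation. *)

theory Submission
  imports Defs
begin

definition right_translation_on :: "('a, 'b) monoid_scheme \<Rightarrow> 'a set \<Rightarrow> 'a \<Rightarrow> 'a \<Rightarrow> 'a" where
  "right_translation_on G H k = (\<lambda>x\<in>carrier G. if x \<in> H then x \<otimes>\<^bsub>G\<^esub> k else x)"

context group
begin

lemma normal_in_subgroupD:
  assumes "subgroup H G" and "K \<lhd> G\<lparr>carrier := H\<rparr>"
  shows "subgroup K G" and "K \<subseteq> H"
proof -
  have "subgroup K (G\<lparr>carrier := H\<rparr>)" using assms(2) normal_imp_subgroup by blast
  then show "subgroup K G" and "K \<subseteq> H"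
    using incl_subgroup[OF assms(1)] subgroup.subset by force+
qed

lemma normal_in_subgroup_conj_closed:
  assumes "subgroup H G" and "K \<lhd> G\<lparr>carrier := H\<rparr>" and "x \<in> H" and "h \<in> K"
  shows "x \<otimes> h \<otimes> inv x \<in> K"
proof -
  have "x \<otimes>\<^bsub>G\<lparr>carrier := H\<rparr>\<^esub> h \<otimes>\<^bsub>G\<lparr>carrier := H\<rparr>\<^esub> inv\<^bsub>G\<lparr>carrier := H\<rparr>\<^esub> x \<in> K"
    using normal.inv_op_closed2[OF assms(2)] assms(3,4) by simp
  then show ?thesis using m_inv_consistent[OF assms(1,3)] by simp
qed

lemma subgroup_mult_mem_iff_left:
  assumes "subgroup H G" and "h \<in> H" and "a \<in> carrier G"
  shows "h \<otimes> a \<in> H \<longleftrightarrow> a \<in> H"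
proof
  have hc: "h \<in> carrier G" using subgroup.mem_carrier[OF assms(1,2)] .
  assume "h \<otimes> a \<in> H"
  then have "inv h \<otimes> (h \<otimes> a) \<in> H"
    by (rule subgroup.m_closed[OF assms(1) subgroup.m_inv_closed[OF assms(1,2)]])
  then show "a \<in> H" using hc assms(3) by (simp add: m_assoc[symmetric])
next
  assume "a \<in> H"
  then show "h \<otimes> a \<in> H" by (rule subgroup.m_closed[OF assms(1,2)])
qed

lemma subgroup_mult_mem_iff_right:
  assumes "subgroup H G" and "h \<in> H" and "a \<in> carrier G"
  shows "a \<otimes> h \<in> H \<longleftrightarrow> a \<in> H"
proof
  have hc: "h \<in> carrier G" using subgroup.mem_carrier[OF assms(1,2)] .
  assume "a \<otimes> h \<in> H"
  then have "(a \<otimes> h) \<otimes> inv h \<in> H"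
    by (rule subgroup.m_closed[OF assms(1) _ subgroup.m_inv_closed[OF assms(1,2)]])
  then show "a \<in> H" using hc assms(3) by (simp add: m_assoc)
next
  assume "a \<in> H"
  then show "a \<otimes> h \<in> H" by (rule subgroup.m_closed[OF assms(1) _ assms(2)])
qed

lemma set_mult_absorb_left_mem_iff:
  assumes "subgroup K G" and "K <#> T = T" and "k \<in> K" and "a \<in> carrier G"
  shows "k \<otimes> a \<in> T \<longleftrightarrow> a \<in> T"
proof
  have kc: "k \<in> carrier G" using subgroup.mem_carrier[OF assms(1,3)] .
  assume "k \<otimes> a \<in> T"
  moreover have "inv k \<in> K" using subgroup.m_inv_closed[OF assms(1,3)] .
  ultimately have "inv k \<otimes> (k \<otimes> a) \<in> K <#> T" unfolding set_mult_def by fast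
  then show "a \<in> T" using assms(2,4) kc by (simp add: m_assoc[symmetric])
next
  assume "a \<in> T"
  then have "k \<otimes> a \<in> K <#> T" using assms(3) unfolding set_mult_def by fast
  then show "k \<otimes> a \<in> T" using assms(2) by simp
qed

lemma set_mult_absorb_right_mem_iff:
  assumes "subgroup K G" and "T <#> K = T" and "k \<in> K" and "a \<in> carrier G"
  shows "a \<otimes> k \<in> T \<longleftrightarrow> a \<in> T"
proof
  have kc: "k \<in> carrier G" using subgroup.mem_carrier[OF assms(1,3)] .
  assume "a \<otimes> k \<in> T"
  moreover have "inv k \<in> K" using subgroup.m_inv_closed[OF assms(1,3)] .
  ultimately have "(a \<otimes> k) \<otimes> inv k \<in> T <#> K" unfolding set_mult_def by fast
  then show "a \<in> T" using assms(2,4) kc by (simp add: m_assoc)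
next
  assume "a \<in> T"
  then have "a \<otimes> k \<in> T <#> K" using assms(3) unfolding set_mult_def by fast
  then show "a \<otimes> k \<in> T" using assms(2) by simp
qed

lemma mem_outside_subgroup_absorb_left_iff:
  assumes "subgroup H G" and "subgroup K G" and "K \<subseteq> H" and "K <#> (S - H) = S - H"
    and "c \<in> K" and "g \<in> carrier G" and "g \<notin> H"
  shows "c \<otimes> g \<in> S \<longleftrightarrow> g \<in> S"
proof -
  have "c \<otimes> g \<notin> H" using subgroup_mult_mem_iff_left[OF assms(1) _ assms(6)] assms(3,5,7) by blast
  then show ?thesis
    using set_mult_absorb_left_mem_iff[OF assms(2,4,5,6)] assms(7) by blast
qed

lemma mem_outside_subgroup_absorb_right_iff:
  assumes "subgroup H G" and "subgroup K G" and "K \<subseteq> H" and "(S - H) <#> K = S - H"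
    and "c \<in> K" and "g \<in> carrier G" and "g \<notin> H"
  shows "g \<otimes> c \<in> S \<longleftrightarrow> g \<in> S"
proof -
  have "g \<otimes> c \<notin> H" using subgroup_mult_mem_iff_right[OF assms(1) _ assms(6)] assms(3,5,7) by blast
  then show ?thesis
    using set_mult_absorb_right_mem_iff[OF assms(2,4,5,6)] assms(7) by blast
qed

lemma right_translation_on_inverse:
  assumes "subgroup H G" and "k \<in> H" and "x \<in> carrier G"
  shows "right_translation_on G H (inv k) (right_translation_on G H k x) = x"
proof -
  have "k \<in> carrier G" using subgroup.mem_carrier[OF assms(1,2)] .
  then show ?thesis
    using subgroup_mult_mem_iff_right[OF assms(1,2,3)] assms(3)
    by (simp add: right_translation_on_def m_assoc)
qed

lemma bij_betw_right_translation_on: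
  assumes "subgroup H G" and "k \<in> H"
  shows "bij_betw (right_translation_on G H k) (carrier G) (carrier G)"
proof (rule bij_betw_byWitness[where f' = "right_translation_on G H (inv k)"])
  have kc: "k \<in> carrier G" and inv_k: "inv k \<in> H"
    using subgroup.mem_carrier[OF assms] subgroup.m_inv_closed[OF assms] .
  show "\<forall>x\<in>carrier G. right_translation_on G H (inv k) (right_translation_on G H k x) = x"
    using right_translation_on_inverse[OF assms] by blast
  show "\<forall>x\<in>carrier G. right_translation_on G H k (right_translation_on G H (inv k) x) = x"
    using right_translation_on_inverse[OF assms(1) inv_k] kc by simp
  show "right_translation_on G H k ` carrier G \<subseteq> carrier G"
       "right_translation_on G H (inv k) ` carrier G \<subseteq> carrier G"
    using kc by (auto simp: right_translation_on_def)
qed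

lemma cay_arc_right_translation_on_iff:
  assumes H: "subgroup H G" and N: "K \<lhd> G\<lparr>carrier := H\<rparr>"
    and left: "K <#> (S - H) = S - H" and right: "(S - H) <#> K = S - H"
    and k: "k \<in> K" and x: "x \<in> carrier G" and y: "y \<in> carrier G"
  shows "cay_arc G S (right_translation_on G H k x) (right_translation_on G H k y)
    \<longleftrightarrow> cay_arc G S x y"
proof -
  note K = normal_in_subgroupD[OF H N]
  have kc: "k \<in> carrier G" using subgroup.mem_carrier[OF K(1) k] .
  consider "x \<in> H" "y \<in> H" | "x \<in> H" "y \<notin> H" | "x \<notin> H" "y \<in> H" | "x \<notin> H" "y \<notin> H"
    by blast
  then show ?thesis
  proof cases
    case 1
    have "(y \<otimes> k) \<otimes> inv (x \<otimes> k) = y \<otimes> inv x"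
      using x y kc by (simp add: inv_mult_group m_assoc) (simp add: m_assoc[symmetric])
    then show ?thesis using 1 x y by (simp add: cay_arc_def right_translation_on_def)
  next
    case 2
    have "y \<otimes> inv (x \<otimes> k) = (y \<otimes> inv x) \<otimes> (x \<otimes> inv k \<otimes> inv x)"
      using x y kc by (simp add: inv_mult_group m_assoc) (simp add: m_assoc[symmetric])
    moreover have "x \<otimes> inv k \<otimes> inv x \<in> K"
      using normal_in_subgroup_conj_closed[OF H N 2(1) subgroup.m_inv_closed[OF K(1) k]] .
    moreover have "y \<otimes> inv x \<notin> H"
      using subgroup_mult_mem_iff_right[OF H subgroup.m_inv_closed[OF H 2(1)] y] 2(2) by blast
    ultimately show ?thesis
      using mem_outside_subgroup_absorb_right_iff[OF H K right] 2 x y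
      by (simp add: cay_arc_def right_translation_on_def)
  next
    case 3
    have "(y \<otimes> k) \<otimes> inv x = (y \<otimes> k \<otimes> inv y) \<otimes> (y \<otimes> inv x)"
      using x y kc by (simp add: m_assoc) (simp add: m_assoc[symmetric])
    moreover have "y \<otimes> k \<otimes> inv y \<in> K"
      using normal_in_subgroup_conj_closed[OF H N 3(2) k] .
    moreover have "inv x \<notin> H"
      using subgroup.m_inv_closed[OF H, of "inv x"] x 3(1) by auto
    then have "y \<otimes> inv x \<notin> H"
      using subgroup_mult_mem_iff_left[OF H 3(2)] x by simp
    ultimately show ?thesis
      using mem_outside_subgroup_absorb_left_iff[OF H K left] 3 x y
      by (simp add: cay_arc_def right_translation_on_def)
  next
    case 4
    then show ?thesis using x y by (simp add: cay_arc_def right_translation_on_def)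
  qed
qed

lemma right_translation_on_in_cay_aut:
  assumes "subgroup H G" and "K \<lhd> G\<lparr>carrier := H\<rparr>"
    and "K <#> (S - H) = S - H" and "(S - H) <#> K = S - H" and "k \<in> K"
  shows "right_translation_on G H k \<in> cay_aut G S"
proof -
  have "k \<in> H" using normal_in_subgroupD[OF assms(1,2)] assms(5) by blast
  then show ?thesis
    using bij_betw_right_translation_on[OF assms(1)] cay_arc_right_translation_on_iff[OF assms]
    by (simp add: cay_aut_def right_translation_on_def)
qed

lemma right_translation_on_not_right_regular:
  assumes "subgroup H G" and "H \<noteq> carrier G" and "k \<in> H" and "k \<noteq> \<one>"
  shows "right_translation_on G H k \<notin> right_regular G"
proof
  assume "right_translation_on G H k \<in> right_regular G"
  then obtain g where "g \<in> carrier G"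
    and g: "right_translation_on G H k = (\<lambda>x\<in>carrier G. x \<otimes> g)"
    unfolding right_regular_def by blast
  have kc: "k \<in> carrier G" using subgroup.mem_carrier[OF assms(1,3)] .
  have "g = k"
    using fun_cong[OF g, of \<one>] subgroup.one_closed[OF assms(1)] kc \<open>g \<in> carrier G\<close>
    by (simp add: right_translation_on_def)
  obtain y where y: "y \<in> carrier G" "y \<notin> H"
    using subgroup.subset[OF assms(1)] assms(2) by blast
  then have "y \<otimes> k = y"
    using fun_cong[OF g, of y] \<open>g = k\<close> by (simp add: right_translation_on_def)
  then show False using y(1) kc assms(4) by simp
qed

lemma not_is_DRR_if_normal_subgroup_absorbs:
  assumes "subgroup H G" and "H \<noteq> carrier G" and "K \<lhd> G\<lparr>carrier := H\<rparr>" and "K \<noteq> {\<one>}"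
    and "K <#> (S - H) = S - H" and "(S - H) <#> K = S - H"
  shows "\<not> is_DRR G S"
proof -
  note K = normal_in_subgroupD[OF assms(1,3)]
  obtain k where k: "k \<in> K" "k \<noteq> \<one>"
    using assms(4) subgroup.one_closed[OF K(1)] by blast
  then have "right_translation_on G H k \<in> cay_aut G S - right_regular G"
    using right_translation_on_in_cay_aut[OF assms(1,3,5,6)]
      right_translation_on_not_right_regular[OF assms(1,2)] K(2) by blast
  then show ?thesis unfolding is_DRR_def by blast
qed

end

theorem corollary2p3:
  fixes R (structure) and S K H :: "'a set"
  assumes "group R" and "finite (carrier R)"
    and "S \<subseteq> carrier R"
    and "subgroup K R" and "subgroup H R"
    and "K \<noteq> {\<one>}"
    and "K \<subseteq> H" and "normal K (R\<lparr>carrier := H\<rparr>)"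
    and "H \<noteq> carrier R"
    and "K <#> (S - H) = S - H" and "(S - H) <#> K = S - H"
    and "aut_stab_trivial R S"
  shows "\<not> is_DRR R S \<and> \<not> DRR_detecting R \<and>
         (S = inv_set R S \<longrightarrow> \<not> is_GRR R S \<and> \<not> GRR_detecting R)"
proof -
  have not_DRR: "\<not> is_DRR R S"
    using group.not_is_DRR_if_normal_subgroup_absorbs[OF assms(1,5,9,8,6,10,11)] .
  then have "\<not> DRR_detecting R"
    using assms(3,12) unfolding DRR_detecting_def by blast
  moreover have "\<not> is_GRR R S" using not_DRR unfolding is_GRR_def by blast
  moreover have "S = inv_set R S \<Longrightarrow> \<not> GRR_detecting R"
    using \<open>\<not> is_GRR R S\<close> assms(3,12) unfolding GRR_detecting_def by blast
  ultimately show ?thesis using not_DRR by blast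
qed

end
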